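(* There exists a $77$-vertex triangulation $X$ of the cube $[0,1]^3$ satisfying: (a) each $2$-dimensional face of $[0,1]^3$ contains $16$ vertices of $X$; (b) $64$ vertices of $X$ are the points $(i/3,j/3,k/3)$, $0\le i,j,k\le 3$; (c) the remaining $13$ vertices belong to the set $\{((i+1/2)/3,(j+1/2)/3,(k+1/2)/3):0\le i,j,k\le2\}$ of $27$ points; (d) the triangulation induced on $\{1\}\times[0,1]\times[0,1]$ is the translate of the triangulation induced on $\{0\}\times[0,1]\times[0,1]$, and likewise for the other two pairs of opposite faces of the cube; (e) the diameter of each tetrahedron of $X$ is at most $\sqrt{2}/3$.
   Context: Diameters are measured in the Euclidean metric on $\mathbb{R}^3$; triangulations are by rectilinear simplices. *)

theory Defs
  imports "HOL-Analysis.Analysis"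
begin

definition pt :: "real \<Rightarrow> real \<Rightarrow> real \<Rightarrow> real^3" where
  "pt a b c = (\<chi> i. if i = 1 then a else if i = 2 then b else c)"

definition unit_cube :: "(real^3) set" where
  "unit_cube = {x. \<forall>i. 0 \<le> x $ i \<and> x $ i \<le> 1}"

definition triangulation_of :: "(real^3) set set \<Rightarrow> (real^3) set \<Rightarrow> bool" where
  "triangulation_of X P \<longleftrightarrow>
     finite X \<and>
     (\<forall>S\<in>X. card S = 4 \<and> \<not> affine_dependent S) \<and>
     (\<Union>S\<in>X. convex hull S) = P \<and>
     (\<forall>S\<in>X. \<forall>T\<in>X. (convex hull S) \<inter> (convex hull T) = convex hull (S \<inter> T))"

definition verts :: "(real^3) set set \<Rightarrow> (real^3) set" where
  "verts X = \<Union>X"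

definition cube_face :: "3 \<Rightarrow> real \<Rightarrow> (real^3) set" where
  "cube_face i c = {x \<in> unit_cube. x $ i = c}"

definition induced_tris :: "(real^3) set set \<Rightarrow> (real^3) set \<Rightarrow> (real^3) set set" where
  "induced_tris X F = {T. \<exists>S\<in>X. T \<subseteq> S \<and> card T = 3 \<and> T \<subseteq> F}"

definition grid_pts :: "(real^3) set" where
  "grid_pts = {pt (real i / 3) (real j / 3) (real k / 3) | i j k :: nat. i \<le> 3 \<and> j \<le> 3 \<and> k \<le> 3}"

definition centre_pts :: "(real^3) set" where
  "centre_pts = {pt ((real i + 1/2) / 3) ((real j + 1/2) / 3) ((real k + 1/2) / 3) | i j k :: nat.
                   i \<le> 2 \<and> j \<le> 2 \<and> k \<le> 2}"

end

theory Submission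
  imports Defs
begin

(*
  The cube is cut into 27 subcubes of side 1/3. Fourteen of them are cut into five tetrahedra
  (a regular tetrahedron on alternate corners and four corner tetrahedra); the other thirteen
  are coned from their centre over their six faces, each face square being halved by a diagonal.
  Every edge is at most a face diagonal of a subcube, of length sqrt 2 / 3, and the diagonals are
  chosen so that adjacent subcubes induce the same triangulation on a common face and opposite
  faces of the cube carry translated triangulations.

  That the tetrahedra cover the cube is checked subcube by subcube with explicit barycentric
  coordinates, up to symmetries of the subcube. That any two of them meet in a common face
  follows from regularity: heights on the 77 vertices are given such that, for every
  tetrahedron, the affine function interpolating the heights at its vertices lies strictly below
  the heights at all other vertices. The hyperplane where the functions of two tetrahedra agree
  then separates them.
*)

section \<open>Convex geometry\<close>

lemma convex_hull_Int_supporting_hyperplane: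
  fixes S :: "'a::euclidean_space set"
  assumes "finite S" and "\<And>v. v \<in> S \<Longrightarrow> a \<bullet> v \<le> b"
  shows "convex hull S \<inter> {x. a \<bullet> x = b} \<subseteq> convex hull {v\<in>S. a \<bullet> v = b}"
proof -
  have "convex hull S \<subseteq> {x. a \<bullet> x \<le> b}"
    using assms(2) by (intro hull_minimal) (auto simp: convex_halfspace_le)
  then have "(convex hull S \<inter> {x. a \<bullet> x = b}) face_of convex hull S"
    by (intro face_of_Int_supporting_hyperplane_le) auto
  then obtain S' where S': "S' \<subseteq> S" "convex hull S \<inter> {x. a \<bullet> x = b} = convex hull S'"
    using face_of_convex_hull_subset finite_imp_compact assms(1) by metis
  then have "S' \<subseteq> {v\<in>S. a \<bullet> v = b}"
    using hull_subset[of S' convex] by auto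
  then show ?thesis
    using S'(2) hull_mono by blast
qed

lemma convex_hull_Int_eq_if_separated:
  fixes S T :: "'a::euclidean_space set"
  assumes "finite S"
    and "\<And>v. v \<in> S \<Longrightarrow> a \<bullet> v \<le> b" and "\<And>v. v \<in> T \<Longrightarrow> b \<le> a \<bullet> v"
    and "\<And>v. v \<in> S \<Longrightarrow> a \<bullet> v = b \<Longrightarrow> v \<in> T"
  shows "convex hull S \<inter> convex hull T = convex hull (S \<inter> T)"
proof
  have "convex hull S \<subseteq> {x. a \<bullet> x \<le> b}"
    using assms(2) by (intro hull_minimal) (auto simp: convex_halfspace_le)
  moreover have "convex hull T \<subseteq> {x. b \<le> a \<bullet> x}"
    using assms(3) by (intro hull_minimal) (auto simp: convex_halfspace_ge)
  ultimately have "convex hull S \<inter> convex hull T \<subseteq> convex hull S \<inter> {x. a \<bullet> x = b}"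
    by (auto simp: subset_iff intro!: order.antisym)
  also have "\<dots> \<subseteq> convex hull {v\<in>S. a \<bullet> v = b}"
    using assms(1,2) by (rule convex_hull_Int_supporting_hyperplane)
  also have "\<dots> \<subseteq> convex hull (S \<inter> T)"
    using assms(4) by (intro hull_mono) auto
  finally show "convex hull S \<inter> convex hull T \<subseteq> convex hull (S \<inter> T)" .
qed (simp add: hull_mono)

text \<open>Two simplices of a regular subdivision: the affine functions \<open>a \<bullet> x + b\<close> and
  \<open>a' \<bullet> x + b'\<close> lie below the heights \<open>h\<close> and touch them exactly on \<open>A\<close> and on \<open>B\<close>.
  The hyperplane where the two functions agree separates the two simplices.\<close>

lemma convex_hull_Int_eq_if_lifted:
  fixes p :: "'i \<Rightarrow> 'a::euclidean_space"
  assumes "finite A" "A \<subseteq> I" "B \<subseteq> I"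
    and A: "\<And>i. i \<in> I \<Longrightarrow> a \<bullet> p i + b \<le> h i \<and> (a \<bullet> p i + b = h i \<longleftrightarrow> i \<in> A)"
    and B: "\<And>i. i \<in> I \<Longrightarrow> a' \<bullet> p i + b' \<le> h i \<and> (a' \<bullet> p i + b' = h i \<longleftrightarrow> i \<in> B)"
  shows "convex hull (p ` A) \<inter> convex hull (p ` B) = convex hull (p ` A \<inter> p ` B)"
proof (rule convex_hull_Int_eq_if_separated[where a = "a' - a" and b = "b - b'"])
  show "(a' - a) \<bullet> x \<le> b - b'" if "x \<in> p ` A" for x
    using that A B assms(2) by (force simp: inner_diff_left)
  show "b - b' \<le> (a' - a) \<bullet> x" if "x \<in> p ` B" for x
    using that A B assms(3) by (force simp: inner_diff_left)
  show "x \<in> p ` B" if "x \<in> p ` A" "(a' - a) \<bullet> x = b - b'" for x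
    using that A B assms(2) by (force simp: inner_diff_left)
qed (use assms(1) in simp)

lemma not_affine_dependent_if_hyperplanes:
  fixes S :: "'a::real_inner set"
  assumes "\<And>v. v \<in> S \<Longrightarrow> \<exists>a b. (\<forall>w\<in>S - {v}. a \<bullet> w = b) \<and> a \<bullet> v \<noteq> b"
  shows "\<not> affine_dependent S"
proof
  assume "affine_dependent S"
  then obtain v where v: "v \<in> S" "v \<in> affine hull (S - {v})"
    unfolding affine_dependent_def by blast
  obtain a b where "\<forall>w\<in>S - {v}. a \<bullet> w = b" "a \<bullet> v \<noteq> b"
    using assms[OF v(1)] by blast
  moreover have "affine hull (S - {v}) \<subseteq> {x. a \<bullet> x = b}" if "\<forall>w\<in>S - {v}. a \<bullet> w = b"
    using that by (intro hull_minimal) (auto simp: affine_hyperplane)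
  ultimately show False
    using v(2) by blast
qed

lemma diameter_convex_hull_le:
  fixes S :: "'a::real_inner set"
  assumes "finite S" "0 \<le> d" "\<And>v w. v \<in> S \<Longrightarrow> w \<in> S \<Longrightarrow> norm (v - w) \<le> d"
  shows "diameter (convex hull S) \<le> d"
  using assms simplex_extremal_le_exists[OF assms(1)] by (intro diameter_le) (auto, force)

lemma convex_hull_affine_image:
  assumes "linear L"
  shows "convex hull ((\<lambda>x. L x + c) ` S) = (\<lambda>x. L x + c) ` (convex hull S)"
proof -
  have "(\<lambda>x. L x + c) ` A = (\<lambda>x. c + x) ` L ` A" for A
    by (auto simp: image_image add.commute)
  then show ?thesis
    by (simp add: convex_hull_translation convex_hull_linear_image[OF assms])
qed

lemma convex_hull_4_memI:
  fixes p q r s :: "'a::real_vector"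
  assumes "0 \<le> a" "0 \<le> b" "0 \<le> c" "0 \<le> d" "a + b + c + d = 1"
  shows "a *\<^sub>R p + b *\<^sub>R q + c *\<^sub>R r + d *\<^sub>R s \<in> convex hull {p, q, r, s}"
proof -
  let ?w = "\<lambda>i::nat. if i = 0 then a else if i = 1 then b else if i = 2 then c else d"
  let ?y = "\<lambda>i::nat. if i = 0 then p else if i = 1 then q else if i = 2 then r else s"
  have "(\<Sum>i\<in>{0, 1, 2, 3}. ?w i *\<^sub>R ?y i) \<in> convex hull {p, q, r, s}"
    by (rule convex_sum) (use assms in \<open>auto intro: hull_inc\<close>)
  then show ?thesis
    by (simp add: algebra_simps)
qed

section \<open>Lattice points\<close>

lemma pt_nth [simp]: "pt a b c $ 1 = a" "pt a b c $ 2 = b" "pt a b c $ 3 = c"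
  by (simp_all add: pt_def)

lemma vec3_eq_iff: "(x::real^3) = y \<longleftrightarrow> x $ 1 = y $ 1 \<and> x $ 2 = y $ 2 \<and> x $ 3 = y $ 3"
  by (simp add: vec_eq_iff forall_3)

lemma pt_eq_iff: "pt a b c = pt a' b' c' \<longleftrightarrow> a = a' \<and> b = b' \<and> c = c'"
  by (simp add: vec3_eq_iff)

lemma inner_pt: "pt a b c \<bullet> pt a' b' c' = a * a' + b * b' + c * c'"
  by (simp add: inner_vec_def sum_3)

text \<open>Vertices have integer coordinates: \<open>lattice_pt 6\<close> maps \<open>[0,6]\<^sup>3\<close> onto the cube,
  so that the centres of the subcubes are lattice points too, and \<open>lattice_pt 2\<close> maps \<open>[0,2]\<^sup>3\<close>
  onto the cube when triangulating a single subcube.\<close>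

type_synonym int3 = "int \<times> int \<times> int"

definition lattice_pt :: "real \<Rightarrow> int3 \<Rightarrow> real^3" where
  "lattice_pt d = (\<lambda>(x, y, z). pt (of_int x / d) (of_int y / d) (of_int z / d))"

lemma lattice_pt_apply:
  "lattice_pt d (x, y, z) = pt (of_int x / d) (of_int y / d) (of_int z / d)"
  by (simp add: lattice_pt_def)

lemma inj_lattice_pt: "d \<noteq> 0 \<Longrightarrow> inj (lattice_pt d)"
  by (rule injI, case_tac x rule: prod_cases3, case_tac y rule: prod_cases3)
    (simp add: lattice_pt_apply pt_eq_iff)

lemma card_lattice_pt_image: "d \<noteq> 0 \<Longrightarrow> distinct xs \<Longrightarrow> card (lattice_pt d ` set xs) = length xs"
  by (simp add: card_image[OF inj_on_subset[OF inj_lattice_pt subset_UNIV]] distinct_card)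

fun vadd :: "int3 \<Rightarrow> int3 \<Rightarrow> int3" where "vadd (a, b, c) (x, y, z) = (a + x, b + y, c + z)"
fun vsub :: "int3 \<Rightarrow> int3 \<Rightarrow> int3" where "vsub (a, b, c) (x, y, z) = (a - x, b - y, c - z)"
fun dot :: "int3 \<Rightarrow> int3 \<Rightarrow> int" where "dot (a, b, c) (x, y, z) = a * x + b * y + c * z"
fun cross :: "int3 \<Rightarrow> int3 \<Rightarrow> int3" where
  "cross (a, b, c) (x, y, z) = (b * z - c * y, c * x - a * z, a * y - b * x)"
fun coord :: "nat \<Rightarrow> int3 \<Rightarrow> int" where
  "coord k (x, y, z) = (if k = 0 then x else if k = 1 then y else z)"

lemma inner_lattice_pt: "lattice_pt 1 n \<bullet> lattice_pt d v = of_int (dot n v) / d"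
  by (cases n rule: prod_cases3, cases v rule: prod_cases3)
    (simp add: lattice_pt_apply inner_pt add_divide_distrib)

lemma norm_lattice_pt_diff:
  assumes "0 < d"
  shows "norm (lattice_pt d u - lattice_pt d v) = sqrt (of_int (dot (vsub u v) (vsub u v))) / d"
proof -
  have "lattice_pt d u - lattice_pt d v = (1 / d) *\<^sub>R lattice_pt 1 (vsub u v)"
    by (cases u rule: prod_cases3, cases v rule: prod_cases3)
      (simp add: lattice_pt_apply vec3_eq_iff diff_divide_distrib)
  moreover have "norm (lattice_pt 1 w) = sqrt (of_int (dot w w))" for w
    using inner_lattice_pt[of w 1 w] by (simp add: norm_eq_sqrt_inner)
  ultimately show ?thesis
    using assms by simp
qed

lemma dot_cross_vsub:
  "dot (cross (vsub q p) (vsub r p)) q = dot (cross (vsub q p) (vsub r p)) p"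
  "dot (cross (vsub q p) (vsub r p)) r = dot (cross (vsub q p) (vsub r p)) p"
  by (cases p rule: prod_cases3, cases q rule: prod_cases3, cases r rule: prod_cases3,
      simp add: algebra_simps)+

lemma dot_vsub: "dot n (vsub v p) = dot n v - dot n p"
  by (cases n rule: prod_cases3, cases v rule: prod_cases3, cases p rule: prod_cases3)
    (simp add: algebra_simps)

lemma even_coord_eq:
  assumes "even x" "0 \<le> x" "x \<le> 6"
  obtains i :: nat where "i \<le> 3" "of_int x / 6 = real i / 3"
proof
  show "nat (x div 2) \<le> 3" "of_int x / 6 = real (nat (x div 2)) / 3"
    using assms by auto
qed

lemma odd_coord_eq:
  assumes "odd x" "0 \<le> x" "x \<le> 6"
  obtains i :: nat where "i \<le> 2" "of_int x / 6 = (real i + 1/2) / 3"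
proof
  have "x = 2 * (x div 2) + 1"
    using assms(1) by presburger
  then show "nat (x div 2) \<le> 2" "of_int x / 6 = (real (nat (x div 2)) + 1/2) / 3"
    using assms by (auto simp: field_simps)
qed

definition coord_index :: "3 \<Rightarrow> nat" where
  "coord_index i = (if i = 1 then 0 else if i = 2 then 1 else 2)"

lemma lattice_pt_nth: "lattice_pt d v $ i = of_int (coord (coord_index i) v) / d"
  using exhaust_3[of i] by (cases v rule: prod_cases3) (auto simp: coord_index_def lattice_pt_apply)

section \<open>Triangulations of a subcube\<close>

definition covered_by :: "int3 list list \<Rightarrow> real^3 \<Rightarrow> bool" where
  "covered_by ts x \<longleftrightarrow> (\<exists>t\<in>set ts. x \<in> convex hull (lattice_pt 2 ` set t))"

lemma covered_by_append [simp]: "covered_by (ts @ ts') x \<longleftrightarrow> covered_by ts x \<or> covered_by ts' x"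
  by (auto simp: covered_by_def)

lemma covered_byI:
  assumes "[p, q, r, s] \<in> set ts"
    and "0 \<le> a" "0 \<le> b" "0 \<le> c" "0 \<le> d" "a + b + c + d = 1"
    and "x = a *\<^sub>R lattice_pt 2 p + b *\<^sub>R lattice_pt 2 q + c *\<^sub>R lattice_pt 2 r
      + d *\<^sub>R lattice_pt 2 s"
  shows "covered_by ts x"
proof -
  have "x \<in> convex hull (lattice_pt 2 ` set [p, q, r, s])"
    using convex_hull_4_memI[OF assms(2-6)] assms(7) by simp
  then show ?thesis
    using assms(1) unfolding covered_by_def by blast
qed

lemma covered_by_image:
  assumes "linear L" "\<And>v. lattice_pt 2 (g v) = L (lattice_pt 2 v) + c"
    and "covered_by ts y" "x = L y + c"
  shows "covered_by (map (map g) ts) x"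
proof -
  obtain t where t: "t \<in> set ts" "y \<in> convex hull (lattice_pt 2 ` set t)"
    using assms(3) by (auto simp: covered_by_def)
  have "lattice_pt 2 ` set (map g t) = (\<lambda>x. L x + c) ` lattice_pt 2 ` set t"
    using assms(2) by (auto simp: image_image)
  then have "x \<in> convex hull (lattice_pt 2 ` set (map g t))"
    using t(2) assms(4) by (simp add: convex_hull_affine_image[OF assms(1)])
  then show ?thesis
    using t(1) by (auto simp: covered_by_def)
qed

fun refl1 :: "int3 \<Rightarrow> int3" where "refl1 (x, y, z) = (2 - x, y, z)"
fun refl2 :: "int3 \<Rightarrow> int3" where "refl2 (x, y, z) = (x, 2 - y, z)"
fun swap12 :: "int3 \<Rightarrow> int3" where "swap12 (x, y, z) = (y, x, z)"
fun swap13 :: "int3 \<Rightarrow> int3" where "swap13 (x, y, z) = (z, y, x)"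

lemma covered_by_refl1:
  assumes "covered_by ts (pt (1 - u) v w)"
  shows "covered_by (map (map refl1) ts) (pt u v w)"
proof (rule covered_by_image[OF _ _ assms])
  show "linear (\<lambda>x::real^3. pt (- x $ 1) (x $ 2) (x $ 3))"
    by (rule linearI) (simp_all add: vec3_eq_iff)
  show "lattice_pt 2 (refl1 p) = (\<lambda>x. pt (- x $ 1) (x $ 2) (x $ 3)) (lattice_pt 2 p) + pt 1 0 0" for p
    by (cases p rule: prod_cases3) (simp add: lattice_pt_apply vec3_eq_iff)
qed (simp add: vec3_eq_iff)

lemma covered_by_refl2:
  assumes "covered_by ts (pt u (1 - v) w)"
  shows "covered_by (map (map refl2) ts) (pt u v w)"
proof (rule covered_by_image[OF _ _ assms])
  show "linear (\<lambda>x::real^3. pt (x $ 1) (- x $ 2) (x $ 3))"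
    by (rule linearI) (simp_all add: vec3_eq_iff)
  show "lattice_pt 2 (refl2 p) = (\<lambda>x. pt (x $ 1) (- x $ 2) (x $ 3)) (lattice_pt 2 p) + pt 0 1 0" for p
    by (cases p rule: prod_cases3) (simp add: lattice_pt_apply vec3_eq_iff)
qed (simp add: vec3_eq_iff)

lemma covered_by_swap12:
  assumes "covered_by ts (pt v u w)"
  shows "covered_by (map (map swap12) ts) (pt u v w)"
proof (rule covered_by_image[OF _ _ assms])
  show "linear (\<lambda>x::real^3. pt (x $ 2) (x $ 1) (x $ 3))"
    by (rule linearI) (simp_all add: vec3_eq_iff)
  show "lattice_pt 2 (swap12 p) = (\<lambda>x. pt (x $ 2) (x $ 1) (x $ 3)) (lattice_pt 2 p) + 0" for p
    by (cases p rule: prod_cases3) (simp add: lattice_pt_apply vec3_eq_iff)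
qed (simp add: vec3_eq_iff)

lemma covered_by_swap13:
  assumes "covered_by ts (pt w v u)"
  shows "covered_by (map (map swap13) ts) (pt u v w)"
proof (rule covered_by_image[OF _ _ assms])
  show "linear (\<lambda>x::real^3. pt (x $ 3) (x $ 2) (x $ 1))"
    by (rule linearI) (simp_all add: vec3_eq_iff)
  show "lattice_pt 2 (swap13 p) = (\<lambda>x. pt (x $ 3) (x $ 2) (x $ 1)) (lattice_pt 2 p) + 0" for p
    by (cases p rule: prod_cases3) (simp add: lattice_pt_apply vec3_eq_iff)
qed (simp add: vec3_eq_iff)

text \<open>The regular tetrahedron on four alternate corners of \<open>[0,2]\<^sup>3\<close> and the four corner
  tetrahedra cut off by its faces.\<close>

definition five_tets :: "int3 list list" where
  "five_tets =
     [[(0,0,0), (2,2,0), (2,0,2), (0,2,2)], [(2,0,0), (0,0,0), (2,2,0), (2,0,2)],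
      [(0,2,0), (0,0,0), (2,2,0), (0,2,2)], [(0,0,2), (0,0,0), (2,0,2), (0,2,2)],
      [(2,2,2), (2,2,0), (2,0,2), (0,2,2)]]"

lemma covered_by_five_tets:
  assumes "u \<in> {0..1}" "v \<in> {0..1}" "w \<in> {0..1}"
  shows "covered_by five_tets (pt u v w)"
proof -
  consider "v + w \<le> u" | "u + w \<le> v" | "u + v \<le> w" | "2 \<le> u + v + w"
    | "u \<le> v + w" "v \<le> u + w" "w \<le> u + v" "u + v + w \<le> 2"
    by linarith
  then show ?thesis
  proof cases
    case 1
    show ?thesis
      by (rule covered_byI[of "(2,0,0)" "(0,0,0)" "(2,2,0)" "(2,0,2)" _ "u - v - w" "1 - u" v w])
        (use assms 1 in \<open>auto simp: five_tets_def lattice_pt_apply vec3_eq_iff\<close>)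
  next
    case 2
    show ?thesis
      by (rule covered_byI[of "(0,2,0)" "(0,0,0)" "(2,2,0)" "(0,2,2)" _ "v - u - w" "1 - v" u w])
        (use assms 2 in \<open>auto simp: five_tets_def lattice_pt_apply vec3_eq_iff\<close>)
  next
    case 3
    show ?thesis
      by (rule covered_byI[of "(0,0,2)" "(0,0,0)" "(2,0,2)" "(0,2,2)" _ "w - u - v" "1 - w" u v])
        (use assms 3 in \<open>auto simp: five_tets_def lattice_pt_apply vec3_eq_iff\<close>)
  next
    case 4
    show ?thesis
      by (rule covered_byI[of "(2,2,2)" "(2,2,0)" "(2,0,2)" "(0,2,2)" _
            "u + v + w - 2" "1 - w" "1 - v" "1 - u"])
        (use assms 4 in \<open>auto simp: five_tets_def lattice_pt_apply vec3_eq_iff\<close>)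
  next
    case 5
    show ?thesis
      by (rule covered_byI[of "(0,0,0)" "(2,2,0)" "(2,0,2)" "(0,2,2)" _ "1 - (u + v + w) / 2"
            "(u + v - w) / 2" "(u - v + w) / 2" "(v + w - u) / 2"])
        (use assms 5 in \<open>auto simp: five_tets_def lattice_pt_apply vec3_eq_iff field_simps\<close>)
  qed
qed

text \<open>The cone from the centre over the face \<open>x = 0\<close> of \<open>[0,2]\<^sup>3\<close>; the square is cut along the
  diagonal through the origin if \<open>d\<close> holds and along the other diagonal otherwise.\<close>

definition pyramid :: "bool \<Rightarrow> int3 list list" where
  "pyramid d = map (map (if d then id else refl2))
     [[(1,1,1), (0,0,0), (0,2,0), (0,2,2)], [(1,1,1), (0,0,0), (0,0,2), (0,2,2)]]"

lemma covered_by_pyramid: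
  assumes "u \<in> {0..1}" "v \<in> {0..1}" "w \<in> {0..1}" "u \<le> min v (1 - v)" "u \<le> min w (1 - w)"
  shows "covered_by (pyramid d) (pt u v w)"
proof -
  have diagonal: "covered_by (pyramid True) (pt u v w)"
    if "u \<in> {0..1}" "v \<in> {0..1}" "w \<in> {0..1}" "u \<le> min v (1 - v)" "u \<le> min w (1 - w)" for u v w
  proof (cases "w \<le> v")
    case True
    show ?thesis
      by (rule covered_byI[of "(1,1,1)" "(0,0,0)" "(0,2,0)" "(0,2,2)" _
            "2 * u" "1 - u - v" "v - w" "w - u"])
        (use that True in \<open>auto simp: pyramid_def lattice_pt_apply vec3_eq_iff\<close>)
  next
    case False
    show ?thesis
      by (rule covered_byI[of "(1,1,1)" "(0,0,0)" "(0,0,2)" "(0,2,2)" _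
            "2 * u" "1 - u - w" "w - v" "v - u"])
        (use that False in \<open>auto simp: pyramid_def lattice_pt_apply vec3_eq_iff\<close>)
  qed
  show ?thesis
  proof (cases d)
    case False
    have "pyramid False = map (map refl2) (pyramid True)"
      by (simp add: pyramid_def)
    moreover have "covered_by (pyramid True) (pt u (1 - v) w)"
      using assms by (intro diagonal) auto
    ultimately show ?thesis
      using False covered_by_refl2 by metis
  qed (use assms diagonal in auto)
qed

definition opposite_pyramids :: "bool \<Rightarrow> bool \<Rightarrow> int3 list list" where
  "opposite_pyramids d d' = pyramid d @ map (map refl1) (pyramid d')"

lemma covered_by_opposite_pyramids:
  assumes "u \<in> {0..1}" "v \<in> {0..1}" "w \<in> {0..1}"
    and "min u (1 - u) \<le> min v (1 - v)" "min u (1 - u) \<le> min w (1 - w)"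
  shows "covered_by (opposite_pyramids d d') (pt u v w)"
proof (cases "u \<le> 1 - u")
  case True
  then show ?thesis
    using assms covered_by_pyramid[of u v w d] by (simp add: opposite_pyramids_def)
next
  case False
  then have "covered_by (pyramid d') (pt (1 - u) v w)"
    using assms by (intro covered_by_pyramid) auto
  then show ?thesis
    by (simp add: opposite_pyramids_def covered_by_refl1)
qed

datatype cube_template = Five_tets bool | Cone bool bool bool bool bool bool

fun template_tets :: "cube_template \<Rightarrow> int3 list list" where
  "template_tets (Five_tets m) = (if m then map (map refl1) five_tets else five_tets)"
| "template_tets (Cone d1 d2 d3 d4 d5 d6) =
     opposite_pyramids d1 d2 @ map (map swap12) (opposite_pyramids d3 d4)
       @ map (map swap13) (opposite_pyramids d5 d6)"

lemma covered_by_template: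
  assumes "u \<in> {0..1}" "v \<in> {0..1}" "w \<in> {0..1}"
  shows "covered_by (template_tets t) (pt u v w)"
proof (cases t)
  case (Five_tets m)
  have "covered_by five_tets (pt (1 - u) v w)"
    using assms by (intro covered_by_five_tets) auto
  then show ?thesis
    using Five_tets assms covered_by_five_tets covered_by_refl1 by auto
next
  case (Cone d1 d2 d3 d4 d5 d6)
  consider "min u (1 - u) \<le> min v (1 - v)" "min u (1 - u) \<le> min w (1 - w)"
    | "min v (1 - v) \<le> min u (1 - u)" "min v (1 - v) \<le> min w (1 - w)"
    | "min w (1 - w) \<le> min u (1 - u)" "min w (1 - w) \<le> min v (1 - v)"
    by linarith
  then show ?thesis
  proof cases
    case 1
    then show ?thesis
      using Cone assms covered_by_opposite_pyramids by simp
  next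
    case 2
    then have "covered_by (opposite_pyramids d3 d4) (pt v u w)"
      using assms by (intro covered_by_opposite_pyramids) auto
    then show ?thesis
      using Cone covered_by_swap12 by simp
  next
    case 3
    then have "covered_by (opposite_pyramids d5 d6) (pt w v u)"
      using assms by (intro covered_by_opposite_pyramids) auto
    then show ?thesis
      using Cone covered_by_swap13 by simp
  qed
qed

section \<open>The triangulation and its certificates\<close>

text \<open>The template of the subcube with lower corner \<open>(i, j, k) / 3\<close> is at index \<open>9 i + 3 j + k\<close>.\<close>

definition subcube_templates :: "cube_template list" where
  "subcube_templates =
     [Five_tets False, Cone False True False True False False, Five_tets True,
      Cone False True False False False True, Five_tets False, Cone False False True True False False,
      Five_tets True, Cone False False False False True True, Five_tets False,
      Cone False False False True False True, Five_tets False, Cone True True False False False False,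
      Five_tets False, Cone False False False False False False, Five_tets True,
      Cone True True False False False False, Five_tets True, Cone False False True False True False,
      Five_tets True, Cone False False False False True True, Five_tets False,
      Cone False False True True False False, Five_tets True, Cone True False False False True False,
      Five_tets False, Cone True False True False False False, Five_tets True]"

definition subcube_tets :: "nat \<Rightarrow> nat \<Rightarrow> nat \<Rightarrow> int3 list list" where
  "subcube_tets i j k = map (map (vadd (2 * int i, 2 * int j, 2 * int k)))
     (template_tets (subcube_templates ! (9 * i + 3 * j + k)))"

definition tets :: "int3 list list" where
  "tets = concat [subcube_tets i j k. i \<leftarrow> [0..<3], j \<leftarrow> [0..<3], k \<leftarrow> [0..<3]]"

definition cube_triangulation :: "(real^3) set set" where
  "cube_triangulation = (\<lambda>l. lattice_pt 6 ` set l) ` set tets"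

text \<open>A regularity certificate: for the \<open>m\<close>-th tetrahedron, \<open>facet_planes ! m = (a, b, D)\<close>
  gives the affine function \<open>(dot a v + b) / D\<close>, which equals the height on the vertices of the
  tetrahedron and is strictly smaller at every other vertex.\<close>

definition height_table :: "(int3 \<times> int) list" where
  "height_table =
     [((0,0,0), 0), ((0,0,2), 13), ((0,0,4), 35), ((0,0,6), 70), ((0,2,0), 13), ((0,2,2), 15),
      ((0,2,4), 39), ((0,2,6), 80), ((0,4,0), 34), ((0,4,2), 39), ((0,4,4), 59), ((0,4,6), 104),
      ((0,6,0), 70), ((0,6,2), 80), ((0,6,4), 104), ((0,6,6), 142), ((1,1,3), 24), ((1,3,1), 24),
      ((1,3,5), 70), ((1,5,3), 70), ((2,0,0), 13), ((2,0,2), 15), ((2,0,4), 39), ((2,0,6), 80),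
      ((2,2,0), 15), ((2,2,2), 28), ((2,2,4), 48), ((2,2,6), 83), ((2,4,0), 39), ((2,4,2), 48),
      ((2,4,4), 72), ((2,4,6), 111), ((2,6,0), 80), ((2,6,2), 83), ((2,6,4), 111), ((2,6,6), 155),
      ((3,1,1), 24), ((3,1,5), 70), ((3,3,3), 57), ((3,5,1), 70), ((3,5,5), 120), ((4,0,0), 35),
      ((4,0,2), 39), ((4,0,4), 59), ((4,0,6), 104), ((4,2,0), 39), ((4,2,2), 48), ((4,2,4), 72),
      ((4,2,6), 111), ((4,4,0), 59), ((4,4,2), 72), ((4,4,4), 100), ((4,4,6), 135), ((4,6,0), 104),
      ((4,6,2), 111), ((4,6,4), 135), ((4,6,6), 181), ((5,1,3), 70), ((5,3,1), 70), ((5,3,5), 120),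
      ((5,5,3), 120), ((6,0,0), 70), ((6,0,2), 80), ((6,0,4), 104), ((6,0,6), 142), ((6,2,0), 80),
      ((6,2,2), 83), ((6,2,4), 111), ((6,2,6), 155), ((6,4,0), 104), ((6,4,2), 111), ((6,4,4), 135),
      ((6,4,6), 181), ((6,6,0), 142), ((6,6,2), 155), ((6,6,4), 181), ((6,6,6), 216)]"

definition facet_planes :: "(int3 \<times> int \<times> int) list" where
  "facet_planes =
     [((15,15,15), 0, 4), ((13,2,2), 0, 2), ((2,13,2), 0, 2), ((2,2,13), 0, 2),
      ((13,13,13), -22, 2), ((-1,1,11), -9, 1), ((-1,2,12), -13, 1), ((15,13,20), -40, 2),
      ((15,9,24), -48, 2), ((1,-1,11), -9, 1), ((2,-1,12), -13, 1), ((13,15,20), -40, 2),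
      ((9,15,24), -48, 2), ((1,1,9), -5, 1), ((13,13,18), -32, 2), ((2,2,15), -25, 1),
      ((9,9,30), -60, 2), ((13,13,75), -170, 4), ((4,4,35), -70, 2), ((9,9,35), -80, 2),
      ((10,3,41), -106, 2), ((3,10,41), -106, 2), ((-1,21,2), -16, 2), ((-1,24,5), -28, 2),
      ((15,24,9), -48, 2), ((15,20,13), -40, 2), ((1,9,1), -5, 1), ((13,18,13), -32, 2),
      ((5,30,5), -52, 2), ((9,30,9), -60, 2), ((2,21,-1), -16, 2), ((5,24,-1), -28, 2),
      ((9,24,15), -48, 2), ((13,20,15), -40, 2), ((11,22,22), -58, 2), ((13,20,20), -50, 2),
      ((9,24,20), -58, 2), ((9,20,24), -58, 2), ((13,24,24), -74, 2), ((1,20,41), -126, 2),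
      ((1,24,45), -158, 2), ((15,24,35), -122, 2), ((15,28,39), -154, 2), ((9,18,35), -98, 2),
      ((3,18,41), -122, 2), ((13,30,39), -158, 2), ((7,30,45), -182, 2), ((9,20,33), -94, 2),
      ((13,24,33), -110, 2), ((3,24,47), -170, 2), ((7,28,47), -186, 2), ((13,75,13), -170, 4),
      ((5,36,5), -76, 2), ((10,41,3), -106, 2), ((9,35,9), -80, 2), ((3,41,10), -106, 2),
      ((1,41,20), -126, 2), ((1,45,24), -158, 2), ((15,35,24), -122, 2), ((15,39,28), -154, 2),
      ((9,33,20), -94, 2), ((13,33,24), -110, 2), ((3,47,24), -170, 2), ((7,47,28), -186, 2),
      ((3,41,18), -122, 2), ((9,35,18), -98, 2), ((7,45,30), -182, 2), ((13,39,30), -158, 2),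
      ((21,83,83), -428, 4), ((13,39,39), -194, 2), ((7,45,38), -214, 2), ((7,38,45), -214, 2),
      ((13,44,44), -244, 2), ((9,1,1), -5, 1), ((18,13,13), -32, 2), ((15,2,2), -25, 1),
      ((30,9,9), -60, 2), ((11,-1,1), -9, 1), ((12,-1,2), -13, 1), ((24,15,9), -48, 2),
      ((20,15,13), -40, 2), ((11,1,-1), -9, 1), ((12,2,-1), -13, 1), ((20,13,15), -40, 2),
      ((24,9,15), -48, 2), ((22,11,22), -58, 2), ((24,9,20), -58, 2), ((20,13,20), -50, 2),
      ((20,9,24), -58, 2), ((24,13,24), -74, 2), ((18,9,35), -98, 2), ((18,3,41), -122, 2),
      ((30,13,39), -158, 2), ((30,7,45), -182, 2), ((20,1,41), -126, 2), ((24,1,45), -158, 2),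
      ((24,15,35), -122, 2), ((28,15,39), -154, 2), ((20,9,33), -94, 2), ((24,13,33), -110, 2),
      ((24,3,47), -170, 2), ((28,7,47), -186, 2), ((22,22,11), -58, 2), ((24,20,9), -58, 2),
      ((20,24,9), -58, 2), ((20,20,13), -50, 2), ((24,24,13), -74, 2), ((9,10,10), -30, 1),
      ((9,12,12), -42, 1), ((15,12,12), -60, 1), ((15,14,14), -72, 1), ((10,9,10), -30, 1),
      ((12,9,12), -42, 1), ((12,15,12), -60, 1), ((14,15,14), -72, 1), ((10,10,9), -30, 1),
      ((12,12,9), -42, 1), ((12,12,15), -60, 1), ((14,14,15), -72, 1), ((26,26,37), -160, 2),
      ((24,24,35), -140, 2), ((28,28,35), -164, 2), ((28,24,39), -172, 2), ((24,28,39), -172, 2),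
      ((18,41,3), -122, 2), ((18,35,9), -98, 2), ((30,45,7), -182, 2), ((30,39,13), -158, 2),
      ((20,33,9), -94, 2), ((24,33,13), -110, 2), ((24,47,3), -170, 2), ((28,47,7), -186, 2),
      ((20,41,1), -126, 2), ((24,45,1), -158, 2), ((24,35,15), -122, 2), ((28,39,15), -154, 2),
      ((26,37,26), -160, 2), ((24,35,24), -140, 2), ((28,39,24), -172, 2), ((28,35,28), -164, 2),
      ((24,39,28), -172, 2), ((18,39,39), -204, 2), ((9,22,22), -127, 1), ((30,35,35), -200, 2),
      ((15,23,23), -155, 1), ((28,33,35), -184, 2), ((24,33,39), -192, 2), ((12,25,22), -151, 1),
      ((13,25,23), -159, 1), ((24,39,33), -192, 2), ((28,35,33), -184, 2), ((12,22,25), -151, 1),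
      ((13,23,25), -159, 1), ((75,13,13), -170, 4), ((35,4,4), -70, 2), ((41,10,3), -106, 2),
      ((41,3,10), -106, 2), ((35,9,9), -80, 2), ((33,9,20), -94, 2), ((33,13,24), -110, 2),
      ((47,3,24), -170, 2), ((47,7,28), -186, 2), ((41,1,20), -126, 2), ((45,1,24), -158, 2),
      ((35,15,24), -122, 2), ((39,15,28), -154, 2), ((35,9,18), -98, 2), ((41,3,18), -122, 2),
      ((39,13,30), -158, 2), ((45,7,30), -182, 2), ((83,21,83), -428, 4), ((45,7,38), -214, 2),
      ((39,13,39), -194, 2), ((38,7,45), -214, 2), ((44,13,44), -244, 2), ((33,20,9), -94, 2),
      ((33,24,13), -110, 2), ((47,24,3), -170, 2), ((47,28,7), -186, 2), ((41,18,3), -122, 2),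
      ((35,18,9), -98, 2), ((45,30,7), -182, 2), ((39,30,13), -158, 2), ((41,20,1), -126, 2),
      ((45,24,1), -158, 2), ((35,24,15), -122, 2), ((39,28,15), -154, 2), ((37,26,26), -160, 2),
      ((35,24,24), -140, 2), ((39,28,24), -172, 2), ((39,24,28), -172, 2), ((35,28,28), -164, 2),
      ((33,28,35), -184, 2), ((33,24,39), -192, 2), ((25,12,22), -151, 1), ((25,13,23), -159, 1),
      ((39,18,39), -204, 2), ((22,9,22), -127, 1), ((35,30,35), -200, 2), ((23,15,23), -155, 1),
      ((35,28,33), -184, 2), ((39,24,33), -192, 2), ((22,12,25), -151, 1), ((23,13,25), -159, 1),
      ((83,83,21), -428, 4), ((45,38,7), -214, 2), ((38,45,7), -214, 2), ((39,39,13), -194, 2),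
      ((44,44,13), -244, 2), ((33,39,24), -192, 2), ((33,35,28), -184, 2), ((25,22,12), -151, 1),
      ((25,23,13), -159, 1), ((39,33,24), -192, 2), ((35,33,28), -184, 2), ((22,25,12), -151, 1),
      ((23,25,13), -159, 1), ((39,39,18), -204, 2), ((22,22,9), -127, 1), ((35,35,30), -200, 2),
      ((23,23,15), -155, 1), ((81,81,81), -594, 4), ((35,35,35), -220, 2), ((46,46,35), -330, 2),
      ((46,35,46), -330, 2), ((35,46,46), -330, 2)]"

definition vertex_list :: "int3 list" where
  "vertex_list = map fst height_table"

text \<open>\<open>vertex_witness ! m\<close> is the index of a tetrahedron having \<open>vertex_list ! m\<close> as a vertex.\<close>

definition vertex_witness :: "nat list" where
  "vertex_witness =
     [0, 3, 5, 17, 2, 0, 6, 21, 22, 23, 34, 40, 51, 55, 57, 68, 5, 22, 39, 56,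
      1, 0, 8, 20, 0, 4, 7, 17, 24, 24, 38, 42, 53, 51, 59, 72, 73, 90, 107, 124,
      141, 75, 75, 85, 93, 75, 76, 89, 92, 102, 106, 110, 119, 126, 126, 136, 144, 158, 175, 192,
      209, 153, 156, 160, 170, 155, 153, 161, 174, 177, 178, 187, 195, 204, 208, 212, 221]"

fun face_shift :: "nat \<Rightarrow> int3 \<Rightarrow> int3" where
  "face_shift k (x, y, z) =
     (if k = 0 then (x + 6, y, z) else if k = 1 then (x, y + 6, z) else (x, y, z + 6))"

fun off_plane :: "int3 \<Rightarrow> int3 list \<Rightarrow> bool" where
  "off_plane v [p, q, r] \<longleftrightarrow> dot (cross (vsub q p) (vsub r p)) (vsub v p) \<noteq> 0"
| "off_plane v _ \<longleftrightarrow> False"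

definition nondegenerate :: "int3 list \<Rightarrow> bool" where
  "nondegenerate l \<longleftrightarrow> list_all (\<lambda>v. off_plane v (filter (\<lambda>w. w \<noteq> v) l)) l"

definition short_edges :: "int3 list \<Rightarrow> bool" where
  "short_edges l \<longleftrightarrow> list_all (\<lambda>v. list_all (\<lambda>w. dot (vsub v w) (vsub v w) \<le> 8) l) l"

definition is_lower_facet :: "int3 list \<Rightarrow> int3 \<times> int \<times> int \<Rightarrow> bool" where
  "is_lower_facet l = (\<lambda>(a, b, D). 0 < D \<and> list_all (\<lambda>(v, h). dot a v + b \<le> D * h) height_table \<and>
     set [v. (v, h) \<leftarrow> height_table, dot a v + b = D * h] = set l)"

fun grid_or_centre :: "int3 \<Rightarrow> bool" where
  "grid_or_centre (x, y, z) \<longleftrightarrow> 0 \<le> x \<and> x \<le> 6 \<and> 0 \<le> y \<and> y \<le> 6 \<and> 0 \<le> z \<and> z \<le> 6 \<and>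
     (even x \<and> even y \<and> even z \<or> odd x \<and> odd y \<and> odd z)"

definition on_face :: "nat \<Rightarrow> int \<Rightarrow> int3 list \<Rightarrow> int3 list" where
  "on_face k e l = filter (\<lambda>v. coord k v = e) l"

definition face_tris :: "nat \<Rightarrow> int \<Rightarrow> int3 list list" where
  "face_tris k e = [on_face k e l. l \<leftarrow> tets, length (on_face k e l) = 3]"

lemma tets_ok: "list_all (\<lambda>l. length l = 4 \<and> distinct l \<and> nondegenerate l \<and> short_edges l) tets"
  by code_simp

lemma tets_lower_facets: "list_all2 is_lower_facet tets facet_planes"
  by code_simp

lemma vertex_list_ok:
  "distinct vertex_list \<and> length vertex_list = 77 \<and> list_all grid_or_centre vertex_list"
  by code_simp

lemma vertex_witness_ok:
  "list_all2 (\<lambda>v n. n < length tets \<and> v \<in> set (tets ! n)) vertex_list vertex_witness"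
  by code_simp

lemma grid_in_vertex_list:
  "list_all (\<lambda>i. list_all (\<lambda>j. list_all (\<lambda>k. (2 * i, 2 * j, 2 * k) \<in> set vertex_list)
     [0..3]) [0..3]) [0..3]"
  by code_simp

lemma faces_ok:
  "list_all (\<lambda>k. list_all (\<lambda>e. length (on_face k e vertex_list) = 16 \<and>
       list_all (\<lambda>l. length (on_face k e l) \<le> 3) tets) [0, 6] \<and>
     list_all2 (\<lambda>t t'. set (map (face_shift k) t) = set t') (face_tris k 0) (face_tris k 6)) [0, 1, 2]"
  by code_simp

lemma tet_props:
  assumes "l \<in> set tets"
  shows "length l = 4" "distinct l" "nondegenerate l" "short_edges l"
  using tets_ok assms by (auto simp: list_all_iff)

lemma vertex_list_props:
  "distinct vertex_list" "length vertex_list = 77" "v \<in> set vertex_list \<Longrightarrow> grid_or_centre v"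
  using vertex_list_ok by (auto simp: list_all_iff)

lemma faces_props:
  assumes "e \<in> {0, 6}"
  shows "length (on_face (coord_index i) e vertex_list) = 16"
    "l \<in> set tets \<Longrightarrow> length (on_face (coord_index i) e l) \<le> 3"
    "list_all2 (\<lambda>t t'. set (map (face_shift (coord_index i)) t) = set t')
       (face_tris (coord_index i) 0) (face_tris (coord_index i) 6)"
  using faces_ok assms by (auto simp: coord_index_def list_all_iff)

section \<open>The tetrahedra\<close>

definition height :: "int3 \<Rightarrow> int" where
  "height v = the (map_of height_table v)"

lemma height_eq: "(v, h) \<in> set height_table \<Longrightarrow> height v = h"
  using vertex_list_props(1) by (simp add: height_def vertex_list_def)

lemma set_filter_pairs: "set [v. (v, h) \<leftarrow> xs, P v h] = {v. \<exists>h. (v, h) \<in> set xs \<and> P v h}"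
  by (induction xs) auto

lemma tet_lower_facet:
  assumes "l \<in> set tets"
  shows "\<exists>n c D. 0 < D \<and> set l \<subseteq> set vertex_list \<and> (\<forall>v \<in> set vertex_list.
    dot n v + c \<le> D * height v \<and> (dot n v + c = D * height v \<longleftrightarrow> v \<in> set l))"
proof -
  obtain m where m: "m < length tets" "tets ! m = l"
    using assms by (auto simp: in_set_conv_nth)
  obtain n c D where "facet_planes ! m = (n, c, D)"
    by (cases "facet_planes ! m") auto
  then have "is_lower_facet l (n, c, D)"
    using list_all2_nthD[OF tets_lower_facets m(1)] m(2) by simp
  then have D: "0 < D" and le: "list_all (\<lambda>(v, h). dot n v + c \<le> D * h) height_table"
    and eq: "set [v. (v, h) \<leftarrow> height_table, dot n v + c = D * h] = set l"
    by (simp_all only: is_lower_facet_def case_prod_conv)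
  have height: "(v, height v) \<in> set height_table" if "v \<in> set vertex_list" for v
    using that height_eq by (force simp: vertex_list_def)
  have "set l = {v. \<exists>h. (v, h) \<in> set height_table \<and> dot n v + c = D * h}"
    using eq unfolding set_filter_pairs by (rule sym)
  also have "\<dots> = {v \<in> set vertex_list. dot n v + c = D * height v}"
    using height height_eq by (force simp: vertex_list_def)
  finally have "set l = {v \<in> set vertex_list. dot n v + c = D * height v}" .
  moreover have "dot n v + c \<le> D * height v" if "v \<in> set vertex_list" for v
    using bspec[OF le[unfolded list_all_iff] height[OF that]] by simp
  ultimately show ?thesis
    using D by (rule_tac exI[of _ n], rule_tac exI[of _ c], rule_tac exI[of _ D]) blast
qed

lemma tet_subset_vertex_list: "l \<in> set tets \<Longrightarrow> set l \<subseteq> set vertex_list"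
  using tet_lower_facet by blast

lemma set_concat_tets: "set (concat tets) = set vertex_list"
proof
  show "set vertex_list \<subseteq> set (concat tets)"
  proof
    fix v assume "v \<in> set vertex_list"
    then obtain m where m: "m < length vertex_list" "vertex_list ! m = v"
      by (auto simp: in_set_conv_nth)
    then have "vertex_witness ! m < length tets" "v \<in> set (tets ! (vertex_witness ! m))"
      using list_all2_nthD[OF vertex_witness_ok m(1)] by simp_all
    then show "v \<in> set (concat tets)"
      by (auto intro: nth_mem)
  qed
  show "set (concat tets) \<subseteq> set vertex_list"
    using tet_subset_vertex_list by (auto simp: set_concat)
qed

lemma of_int_divide_le_iff: "0 < D \<Longrightarrow> of_int x / of_int D \<le> (of_int h :: real) \<longleftrightarrow> x \<le> D * h"
  by (simp add: pos_divide_le_eq mult.commute flip: of_int_mult)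

lemma of_int_divide_eq_iff: "0 < D \<Longrightarrow> of_int x / of_int D = (of_int h :: real) \<longleftrightarrow> x = D * h"
  by (simp add: divide_eq_eq mult.commute flip: of_int_mult)

definition lifting_facet :: "real^3 \<Rightarrow> real \<Rightarrow> int3 list \<Rightarrow> bool" where
  "lifting_facet a b l \<longleftrightarrow> (\<forall>v\<in>set vertex_list. a \<bullet> lattice_pt 6 v + b \<le> of_int (height v) \<and>
     (a \<bullet> lattice_pt 6 v + b = of_int (height v) \<longleftrightarrow> v \<in> set l))"

lemma tet_lifting_facet:
  assumes "l \<in> set tets"
  shows "\<exists>a b. lifting_facet a b l"
proof -
  obtain n c D where D: "0 < D" and lower: "\<And>v. v \<in> set vertex_list \<Longrightarrow>
      dot n v + c \<le> D * height v \<and> (dot n v + c = D * height v \<longleftrightarrow> v \<in> set l)"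
    using tet_lower_facet[OF assms] by blast
  define a where "a = (6 / of_int D) *\<^sub>R lattice_pt 1 n"
  define b where "b = of_int c / (of_int D :: real)"
  have affine_value: "a \<bullet> lattice_pt 6 v + b = of_int (dot n v + c) / of_int D" for v
    by (simp add: a_def b_def inner_lattice_pt add_divide_distrib)
  have "lifting_facet a b l"
    unfolding lifting_facet_def affine_value of_int_divide_le_iff[OF D] of_int_divide_eq_iff[OF D]
    using lower by blast
  then show ?thesis
    by blast
qed

lemma convex_hull_Int_tets:
  assumes "l \<in> set tets" "l' \<in> set tets"
  shows "convex hull (lattice_pt 6 ` set l) \<inter> convex hull (lattice_pt 6 ` set l')
       = convex hull (lattice_pt 6 ` set l \<inter> lattice_pt 6 ` set l')"
proof -
  obtain a b a' b' where A: "lifting_facet a b l" and B: "lifting_facet a' b' l'"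
    using tet_lifting_facet assms by meson
  show ?thesis
    using tet_subset_vertex_list[OF assms(1)] tet_subset_vertex_list[OF assms(2)]
    by (intro convex_hull_Int_eq_if_lifted[OF _ _ _ A[unfolded lifting_facet_def, THEN bspec]
          B[unfolded lifting_facet_def, THEN bspec]]) auto
qed

lemma not_affine_dependent_tet:
  assumes "l \<in> set tets"
  shows "\<not> affine_dependent (lattice_pt 6 ` set l)"
proof (rule not_affine_dependent_if_hyperplanes)
  fix x assume "x \<in> lattice_pt 6 ` set l"
  then obtain v where v: "v \<in> set l" "x = lattice_pt 6 v"
    by auto
  then have "off_plane v (filter (\<lambda>w. w \<noteq> v) l)"
    using tet_props(3)[OF assms] by (auto simp: nondegenerate_def list_all_iff)
  then obtain p q r where pqr: "filter (\<lambda>w. w \<noteq> v) l = [p, q, r]"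
    and off: "dot (cross (vsub q p) (vsub r p)) (vsub v p) \<noteq> 0"
    by (cases "(v, filter (\<lambda>w. w \<noteq> v) l)" rule: off_plane.cases) auto
  define n where "n = cross (vsub q p) (vsub r p)"
  have "set l - {v} = {p, q, r}"
    using arg_cong[OF pqr, of set] by auto
  moreover have "lattice_pt 6 ` set l - {x} = lattice_pt 6 ` (set l - {v})"
    using v inj_lattice_pt[of 6] by (simp add: image_set_diff)
  ultimately have "lattice_pt 6 ` set l - {x} = {lattice_pt 6 p, lattice_pt 6 q, lattice_pt 6 r}"
    by simp
  moreover have "dot n q = dot n p" "dot n r = dot n p" "dot n v \<noteq> dot n p"
    using dot_cross_vsub[of q p r] dot_vsub[of n v p] off by (simp_all add: n_def)
  ultimately show "\<exists>a b. (\<forall>w\<in>lattice_pt 6 ` set l - {x}. a \<bullet> w = b) \<and> a \<bullet> x \<noteq> b"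
    using v by (intro exI[of _ "lattice_pt 1 n"] exI[of _ "of_int (dot n p) / 6"])
      (auto simp: inner_lattice_pt)
qed

lemma diameter_tet:
  assumes "l \<in> set tets"
  shows "diameter (convex hull (lattice_pt 6 ` set l)) \<le> sqrt 2 / 3"
proof (rule diameter_convex_hull_le)
  fix x y assume "x \<in> lattice_pt 6 ` set l" "y \<in> lattice_pt 6 ` set l"
  then obtain v w where "v \<in> set l" "w \<in> set l" "x = lattice_pt 6 v" "y = lattice_pt 6 w"
    by auto
  then have "norm (x - y) \<le> sqrt 8 / 6"
    using tet_props(4)[OF assms] by (auto simp: short_edges_def list_all_iff norm_lattice_pt_diff)
  also have "sqrt 8 = 2 * sqrt (2::real)"
    using real_sqrt_mult[of 4 2] by simp
  finally show "norm (x - y) \<le> sqrt 2 / 3"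
    by simp
qed auto

lemma lattice_pt_in_unit_cube: "grid_or_centre v \<Longrightarrow> lattice_pt 6 v \<in> unit_cube"
  by (cases v rule: prod_cases3) (auto simp: unit_cube_def forall_3 lattice_pt_apply)

lemma unit_cube_eq_cbox: "unit_cube = cbox 0 (1::real^3)"
  by (auto simp: unit_cube_def mem_box_cart)

lemma convex_unit_cube: "convex unit_cube"
  by (simp add: unit_cube_eq_cbox convex_box)

lemma convex_hull_tet_subset: "l \<in> set tets \<Longrightarrow> convex hull (lattice_pt 6 ` set l) \<subseteq> unit_cube"
  using tet_subset_vertex_list vertex_list_props(3) lattice_pt_in_unit_cube
  by (intro hull_minimal convex_unit_cube) blast

lemma subcube_tets_subset:
  assumes "i < 3" "j < 3" "k < 3"
  shows "set (subcube_tets i j k) \<subseteq> set tets"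
proof -
  have "set tets = (\<Union>i\<in>{0..<3}. \<Union>j\<in>{0..<3}. \<Union>k\<in>{0..<3}. set (subcube_tets i j k))"
    by (simp add: tets_def)
  moreover have "i \<in> {0..<3}" "j \<in> {0..<3}" "k \<in> {0..<3}"
    using assms by auto
  ultimately show ?thesis
    by blast
qed

lemma subcube_index: "r \<in> {0..1} \<Longrightarrow> \<exists>i<3. 3 * r - real i \<in> {0..1}"
  by (cases "3 * r \<le> 1"; cases "3 * r \<le> 2") (auto intro: exI[of _ 0] exI[of _ 1] exI[of _ 2])

lemma lattice_pt_subcube:
  "lattice_pt 6 (vadd (2 * int i, 2 * int j, 2 * int k) e)
     = pt (real i / 3) (real j / 3) (real k / 3) + (1 / 3) *\<^sub>R lattice_pt 2 e"
  by (cases e rule: prod_cases3) (simp add: lattice_pt_apply vec3_eq_iff field_simps)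

lemma unit_cube_subset_tets: "unit_cube \<subseteq> (\<Union>l\<in>set tets. convex hull (lattice_pt 6 ` set l))"
proof
  fix x :: "real^3"
  assume "x \<in> unit_cube"
  then have "x $ 1 \<in> {0..1}" "x $ 2 \<in> {0..1}" "x $ 3 \<in> {0..1}"
    by (auto simp: unit_cube_def)
  then obtain i j k where ijk: "i < 3" "j < 3" "k < 3"
    and uvw: "3 * x $ 1 - real i \<in> {0..1}" "3 * x $ 2 - real j \<in> {0..1}"
      "3 * x $ 3 - real k \<in> {0..1}"
    using subcube_index by meson
  define f where "f y = pt (real i / 3) (real j / 3) (real k / 3) + (1 / 3) *\<^sub>R y" for y
  obtain t where t: "t \<in> set (template_tets (subcube_templates ! (9 * i + 3 * j + k)))"
    and local: "pt (3 * x $ 1 - real i) (3 * x $ 2 - real j) (3 * x $ 3 - real k)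
      \<in> convex hull (lattice_pt 2 ` set t)"
    using covered_by_template[OF uvw] unfolding covered_by_def by blast
  define l where "l = map (vadd (2 * int i, 2 * int j, 2 * int k)) t"
  have "l \<in> set tets"
    using t subcube_tets_subset[OF ijk] by (auto simp: l_def subcube_tets_def)
  moreover have "lattice_pt 6 ` set l = f ` lattice_pt 2 ` set t"
    by (auto simp: l_def f_def image_image lattice_pt_subcube)
  then have "convex hull (lattice_pt 6 ` set l) = f ` (convex hull (lattice_pt 2 ` set t))"
    by (simp add: f_def convex_hull_affinity)
  moreover have "x = f (pt (3 * x $ 1 - real i) (3 * x $ 2 - real j) (3 * x $ 3 - real k))"
    by (simp add: f_def vec3_eq_iff field_simps)
  ultimately show "x \<in> (\<Union>l\<in>set tets. convex hull (lattice_pt 6 ` set l))"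
    using local by blast
qed

lemma triangulation_of_cube_triangulation: "triangulation_of cube_triangulation unit_cube"
  unfolding triangulation_of_def
proof (intro conjI ballI)
  show "finite cube_triangulation"
    by (simp add: cube_triangulation_def)
  show "card S = 4" "\<not> affine_dependent S" if "S \<in> cube_triangulation" for S
    using that tet_props card_lattice_pt_image not_affine_dependent_tet
    by (auto simp: cube_triangulation_def)
  show "(\<Union>S\<in>cube_triangulation. convex hull S) = unit_cube"
    using unit_cube_subset_tets convex_hull_tet_subset by (auto simp: cube_triangulation_def)
  show "convex hull S \<inter> convex hull T = convex hull (S \<inter> T)"
    if "S \<in> cube_triangulation" "T \<in> cube_triangulation" for S T
    using that convex_hull_Int_tets by (auto simp: cube_triangulation_def)
qed

section \<open>Vertices and boundary faces\<close>

lemma verts_cube_triangulation: "verts cube_triangulation = lattice_pt 6 ` set vertex_list"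
  unfolding verts_def cube_triangulation_def set_concat_tets[symmetric] by auto

lemma card_verts_cube_triangulation: "card (verts cube_triangulation) = 77"
  using card_lattice_pt_image[of 6 vertex_list] vertex_list_props(1,2)
  by (simp add: verts_cube_triangulation)

lemma grid_or_centre_pts:
  assumes "grid_or_centre v"
  shows "lattice_pt 6 v \<in> grid_pts \<union> centre_pts"
proof -
  obtain x y z where v: "v = (x, y, z)"
    by (cases v rule: prod_cases3)
  consider "even x" "even y" "even z" | "odd x" "odd y" "odd z"
    using assms by (auto simp: v)
  then show ?thesis
  proof cases
    case 1
    then obtain i j k where "i \<le> 3" "j \<le> 3" "k \<le> 3"
      "lattice_pt 6 v = pt (real i / 3) (real j / 3) (real k / 3)"
      using assms by (auto simp: v lattice_pt_apply elim!: even_coord_eq)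
    then show ?thesis
      unfolding grid_pts_def by blast
  next
    case 2
    then obtain i j k where "i \<le> 2" "j \<le> 2" "k \<le> 2"
      "lattice_pt 6 v = pt ((real i + 1/2) / 3) ((real j + 1/2) / 3) ((real k + 1/2) / 3)"
      using assms by (auto simp: v lattice_pt_apply elim!: odd_coord_eq)
    then show ?thesis
      unfolding centre_pts_def by blast
  qed
qed

lemma grid_pts_subset_verts: "grid_pts \<subseteq> verts cube_triangulation"
proof
  fix x assume "x \<in> grid_pts"
  then obtain i j k :: nat where ijk: "i \<le> 3" "j \<le> 3" "k \<le> 3"
    and x: "x = pt (real i / 3) (real j / 3) (real k / 3)"
    unfolding grid_pts_def by blast
  have "(2 * int i, 2 * int j, 2 * int k) \<in> set vertex_list"
    using grid_in_vertex_list ijk by (auto simp: list_all_iff)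
  moreover have "x = lattice_pt 6 (2 * int i, 2 * int j, 2 * int k)"
    using x by (simp add: lattice_pt_apply)
  ultimately show "x \<in> verts cube_triangulation"
    by (simp add: verts_cube_triangulation)
qed

lemma verts_diff_grid_pts_subset: "verts cube_triangulation - grid_pts \<subseteq> centre_pts"
proof
  fix x assume "x \<in> verts cube_triangulation - grid_pts"
  then obtain v where "v \<in> set vertex_list" "x = lattice_pt 6 v" "x \<notin> grid_pts"
    by (auto simp: verts_cube_triangulation)
  then show "x \<in> centre_pts"
    using grid_or_centre_pts[OF vertex_list_props(3)] by blast
qed

lemma lattice_pt_in_cube_face_iff:
  assumes "grid_or_centre v" "of_int e = 6 * c"
  shows "lattice_pt 6 v \<in> cube_face i c \<longleftrightarrow> coord (coord_index i) v = e"
proof -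
  have "lattice_pt 6 v \<in> cube_face i c \<longleftrightarrow> of_int (coord (coord_index i) v) = (of_int e :: real)"
    using lattice_pt_in_unit_cube[OF assms(1)] assms(2) by (auto simp: cube_face_def lattice_pt_nth)
  then show ?thesis
    by simp
qed

lemma cube_face_level: "c \<in> {0, 1} \<Longrightarrow> \<exists>e \<in> {0, 6}. of_int e = (6 * c :: real)"
  by auto

lemma card_verts_Int_cube_face:
  assumes "c \<in> {0, 1}"
  shows "card (verts cube_triangulation \<inter> cube_face i c) = 16"
proof -
  obtain e where e: "e \<in> {0, 6}" "of_int e = 6 * c"
    using cube_face_level[OF assms] by blast
  have "verts cube_triangulation \<inter> cube_face i c
      = lattice_pt 6 ` set (on_face (coord_index i) e vertex_list)"
    using lattice_pt_in_cube_face_iff[OF vertex_list_props(3) e(2)]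
    by (auto simp: verts_cube_triangulation on_face_def)
  also have "card \<dots> = length (on_face (coord_index i) e vertex_list)"
    using vertex_list_props(1) by (intro card_lattice_pt_image) (simp_all add: on_face_def)
  also have "\<dots> = 16"
    using faces_props(1)[OF e(1)] .
  finally show ?thesis .
qed

lemma tet_Int_cube_face:
  assumes "l \<in> set tets" "of_int e = 6 * c"
  shows "lattice_pt 6 ` set l \<inter> cube_face i c = lattice_pt 6 ` set (on_face (coord_index i) e l)"
  using lattice_pt_in_cube_face_iff[OF vertex_list_props(3) assms(2)]
    tet_subset_vertex_list[OF assms(1)]
  by (auto simp: on_face_def)

lemma induced_tris_cube_face:
  assumes e: "e \<in> {0, 6}" "of_int e = 6 * c"
  shows "induced_tris cube_triangulation (cube_face i c)
    = (\<lambda>t. lattice_pt 6 ` set t) ` set (face_tris (coord_index i) e)"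
proof (intro equalityI subsetI)
  fix T assume "T \<in> induced_tris cube_triangulation (cube_face i c)"
  then obtain l where l: "l \<in> set tets" and T: "T \<subseteq> lattice_pt 6 ` set l" "card T = 3" "T \<subseteq> cube_face i c"
    unfolding induced_tris_def cube_triangulation_def by blast
  let ?f = "on_face (coord_index i) e l"
  have "T \<subseteq> lattice_pt 6 ` set ?f"
    using T tet_Int_cube_face[OF l e(2)] by blast
  moreover have "card (lattice_pt 6 ` set ?f) \<le> length ?f"
    by (meson card_image_le card_length finite_set le_trans)
  moreover have "length ?f \<le> 3"
    using faces_props(2)[OF e(1) l] .
  ultimately have "T = lattice_pt 6 ` set ?f" "length ?f = 3"
    using T(2) card_seteq[of "lattice_pt 6 ` set ?f" T] card_mono[of "lattice_pt 6 ` set ?f" T] by auto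
  then show "T \<in> (\<lambda>t. lattice_pt 6 ` set t) ` set (face_tris (coord_index i) e)"
    using l by (force simp: face_tris_def)
next
  fix T assume "T \<in> (\<lambda>t. lattice_pt 6 ` set t) ` set (face_tris (coord_index i) e)"
  then obtain l where l: "l \<in> set tets" and len: "length (on_face (coord_index i) e l) = 3"
    and T: "T = lattice_pt 6 ` set (on_face (coord_index i) e l)"
    by (auto simp: face_tris_def)
  have "card T = 3"
    using T len card_lattice_pt_image[of 6 "on_face (coord_index i) e l"] tet_props(2)[OF l]
    by (simp add: on_face_def)
  moreover have "T \<subseteq> lattice_pt 6 ` set l"
    using T by (auto simp: on_face_def)
  moreover have "T \<subseteq> cube_face i c"
    using T tet_Int_cube_face[OF l e(2)] by blast
  ultimately show "T \<in> induced_tris cube_triangulation (cube_face i c)"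
    using l unfolding induced_tris_def cube_triangulation_def by blast
qed

lemma lattice_pt_face_shift:
  "lattice_pt 6 (face_shift (coord_index i) v) = lattice_pt 6 v + axis i 1"
  using exhaust_3[of i]
  by (cases v rule: prod_cases3)
    (auto simp: coord_index_def lattice_pt_apply axis_def vec3_eq_iff field_simps)

lemma image_set_map_eq_if_list_all2:
  "list_all2 (\<lambda>t t'. set (map g t) = set t') A B \<Longrightarrow>
     (\<lambda>t. f ` set (map g t)) ` set A = (\<lambda>t. f ` set t) ` set B"
  by (induction A B rule: list_all2_induct) auto

lemma induced_tris_opposite_faces:
  "induced_tris cube_triangulation (cube_face i 1)
     = (\<lambda>T. (\<lambda>v. v + axis i 1) ` T) ` induced_tris cube_triangulation (cube_face i 0)"
proof -
  have face0: "induced_tris cube_triangulation (cube_face i 0)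
      = (\<lambda>t. lattice_pt 6 ` set t) ` set (face_tris (coord_index i) 0)"
    by (rule induced_tris_cube_face) auto
  have face1: "induced_tris cube_triangulation (cube_face i 1)
      = (\<lambda>t. lattice_pt 6 ` set t) ` set (face_tris (coord_index i) 6)"
    by (rule induced_tris_cube_face) auto
  have "(\<lambda>T. (\<lambda>v. v + axis i 1) ` T) ` induced_tris cube_triangulation (cube_face i 0)
      = (\<lambda>t. lattice_pt 6 ` set (map (face_shift (coord_index i)) t)) ` set (face_tris (coord_index i) 0)"
    by (simp add: face0 image_image lattice_pt_face_shift)
  also have "\<dots> = (\<lambda>t. lattice_pt 6 ` set t) ` set (face_tris (coord_index i) 6)"
    using faces_props(3)[of 0 i] by (rule image_set_map_eq_if_list_all2) simp
  also have "\<dots> = induced_tris cube_triangulation (cube_face i 1)"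
    by (simp add: face1)
  finally show ?thesis ..
qed

theorem lemma8:
  shows "\<exists>X. triangulation_of X unit_cube \<and>
    card (verts X) = 77 \<and>
    (\<forall>i c. c \<in> {0, 1} \<longrightarrow> card (verts X \<inter> cube_face i c) = 16) \<and>
    grid_pts \<subseteq> verts X \<and>
    verts X - grid_pts \<subseteq> centre_pts \<and>
    (\<forall>i. induced_tris X (cube_face i 1) =
           (\<lambda>T. (\<lambda>v. v + axis i 1) ` T) ` induced_tris X (cube_face i 0)) \<and>
    (\<forall>S\<in>X. diameter (convex hull S) \<le> sqrt 2 / 3)"
  using triangulation_of_cube_triangulation card_verts_cube_triangulation card_verts_Int_cube_face
    grid_pts_subset_verts verts_diff_grid_pts_subset induced_tris_opposite_faces diameter_tet
  by (intro exI[of _ cube_triangulation]) (auto simp: cube_triangulation_def)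

end
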